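(* Consider a combinatorial auction on a finite item set $X$ using the VCG rules. Let $u_1,\dots,u_k$ be the (reported) valuations of the other bidders and let $u=u_1\vee\dots\vee u_k$ be their combined valuation; suppose $u$ is submodular. Let a player have true valuation $v$. Suppose that instead of bidding under a single identity the player places bids under two identities with valuations $v_1$ and $v_2$, receiving bundles $S_1,S_2$ and paying VCG payments $p_1,p_2$ in that auction. Then $v(S_1\cup S_2)-p_1-p_2$ is at most the utility the player obtains by bidding truthfully $v$ under a single identity; that is, the player cannot benefit from placing false-name bids.
   Context: A valuation on $X$ is a function $w:2^X\to\mathbb{R}_{\ge 0}$ with $w(\emptyset)=0$ and monotone under inclusion. For valuations $w_1,w_2$, $(w_1\vee w_2)(S)=\max_{T\subseteq S}(w_1(T)+w_2(S\setminus T))$; this is associative, and $w_1\vee\dots\vee w_k(S)$ is the maximum of $\sum_i w_i(T_i)$ over partitions of $S$ into $T_1,\dots,T_k$. A valuation $w$ is submodular if $w(A)+w(B)\ge w(A\cup B)+w(A\cap B)$ for all $A,B\subseteq X$. VCG rules: given reported valuations of all bidders, the items are allocated by an allocation (partition of $X$) maximizing the sum of reported valuations; a bidder $i$ receiving $S_i$ pays $\max\sum_{j\ne i}w_j(T_j)-\sum_{j\ne i}w_j(S_j)$, where the max is over allocations of $X$ among the bidders other than $i$ (equivalently, with an optimal allocation, $W_{-i}(X)-W_{-i}(X\setminus S_i)$ where $W_{-i}$ is the OR of the other bidders' valuations). A bidder's utility is his true value of the items received minus the payments made. *)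

theory Defs
  imports Complex_Main
begin

type_synonym 'a valuation = "'a set \<Rightarrow> real"

definition valuation :: "'a set \<Rightarrow> 'a valuation \<Rightarrow> bool" where
  "valuation X w \<longleftrightarrow> w {} = 0 \<and> (\<forall>S. S \<subseteq> X \<longrightarrow> 0 \<le> w S)
     \<and> (\<forall>S T. S \<subseteq> T \<longrightarrow> T \<subseteq> X \<longrightarrow> w S \<le> w T)"

definition submodular :: "'a set \<Rightarrow> 'a valuation \<Rightarrow> bool" where
  "submodular X w \<longleftrightarrow> (\<forall>A B. A \<subseteq> X \<longrightarrow> B \<subseteq> X \<longrightarrow>
     w (A \<union> B) + w (A \<inter> B) \<le> w A + w B)"

definition vee :: "'a valuation \<Rightarrow> 'a valuation \<Rightarrow> 'a valuation" where
  "vee w1 w2 S = Max ((\<lambda>T. w1 T + w2 (S - T)) ` Pow S)"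

definition OR_list :: "'a valuation list \<Rightarrow> 'a valuation" where
  "OR_list ws = foldr vee ws (\<lambda>_. 0)"

definition is_alloc :: "'a set \<Rightarrow> 'b set \<Rightarrow> ('b \<Rightarrow> 'a set) \<Rightarrow> bool" where
  "is_alloc S J A \<longleftrightarrow> (\<forall>i\<in>J. A i \<subseteq> S) \<and> (\<forall>i\<in>J. \<forall>j\<in>J. i \<noteq> j \<longrightarrow> A i \<inter> A j = {})
     \<and> (\<Union>i\<in>J. A i) = S"

definition welfare :: "('b \<Rightarrow> 'a valuation) \<Rightarrow> 'b set \<Rightarrow> ('b \<Rightarrow> 'a set) \<Rightarrow> real" where
  "welfare w J A = (\<Sum>i\<in>J. w i (A i))"

definition opt_welfare :: "'a set \<Rightarrow> 'b set \<Rightarrow> ('b \<Rightarrow> 'a valuation) \<Rightarrow> real" where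
  "opt_welfare S J w = Max {welfare w J A | A. is_alloc S J A}"

definition optimal_alloc :: "'a set \<Rightarrow> 'b set \<Rightarrow> ('b \<Rightarrow> 'a valuation) \<Rightarrow> ('b \<Rightarrow> 'a set) \<Rightarrow> bool" where
  "optimal_alloc X J w A \<longleftrightarrow> is_alloc X J A \<and>
     (\<forall>B. is_alloc X J B \<longrightarrow> welfare w J B \<le> welfare w J A)"

definition vcg_payment :: "'a set \<Rightarrow> 'b set \<Rightarrow> ('b \<Rightarrow> 'a valuation) \<Rightarrow> ('b \<Rightarrow> 'a set) \<Rightarrow> 'b \<Rightarrow> real" where
  "vcg_payment X J w A i = opt_welfare X (J - {i}) w - welfare w (J - {i}) A"

end

theory Submission
  imports Defs "HOL-Library.FuncSet"
begin

text \<open>Let U be the OR of the other bidders' valuations and R = X - (S1 \<union> S2) the items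
  they receive. Whenever the valuation w placed first in an OR is monotone, the optimal welfare
  is (w \<or> U)(X). So identity 1 pays at least U(X - S2) - U R and identity 2 at least
  U(X - S1) - U R, which by submodularity of U add up to at least U X - U R. A truthful bidder
  gets utility (v \<or> U)(X) - U X \<ge> v(S1 \<union> S2) + U R - U X.\<close>

lemma vee_ge:
  assumes "finite S" and "T \<subseteq> S"
  shows "w1 T + w2 (S - T) \<le> vee w1 w2 S"
  unfolding vee_def using assms by (intro Max_ge) auto

lemma vee_attained:
  assumes "finite S"
  obtains T where "T \<subseteq> S" and "vee w1 w2 S = w1 T + w2 (S - T)"
proof -
  have "vee w1 w2 S \<in> (\<lambda>T. w1 T + w2 (S - T)) ` Pow S"
    unfolding vee_def using assms by (intro Max_in) auto
  then show ?thesis using that by auto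
qed

lemma OR_list_Nil [simp]: "OR_list [] = (\<lambda>_. 0)"
  by (simp add: OR_list_def)

lemma OR_list_Cons [simp]: "OR_list (w # ws) = vee w (OR_list ws)"
  by (simp add: OR_list_def)

lemma valuation_mono: "valuation X w \<Longrightarrow> S \<subseteq> T \<Longrightarrow> T \<subseteq> X \<Longrightarrow> w S \<le> w T"
  unfolding valuation_def by blast

lemma is_alloc_insert:
  assumes "i \<notin> J"
  shows "is_alloc S (insert i J) B \<longleftrightarrow> B i \<subseteq> S \<and> is_alloc (S - B i) J B"
  using assms unfolding is_alloc_def by (auto 4 3)

lemma is_alloc_cong: "(\<And>j. j \<in> J \<Longrightarrow> B j = C j) \<Longrightarrow> is_alloc S J B = is_alloc S J C"
  unfolding is_alloc_def by (simp cong: SUP_cong)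

lemma is_alloc_fun_upd [simp]: "i \<notin> J \<Longrightarrow> is_alloc S J (B(i := T)) = is_alloc S J B"
  by (rule is_alloc_cong) auto

lemma welfare_fun_upd [simp]: "i \<notin> J \<Longrightarrow> welfare w J (B(i := T)) = welfare w J B"
  unfolding welfare_def by (auto intro!: sum.cong)

lemma welfare_insert:
  "finite J \<Longrightarrow> i \<notin> J \<Longrightarrow> welfare w (insert i J) B = w i (B i) + welfare w J B"
  unfolding welfare_def by simp

lemma is_alloc_exists:
  assumes "j \<in> J"
  shows "is_alloc S J (\<lambda>i. if i = j then S else {})"
  using assms unfolding is_alloc_def by auto

lemma finite_welfares:
  assumes "finite S" and "finite J"
  shows "finite {welfare w J A | A. is_alloc S J A}"
proof -
  have "{welfare w J A | A. is_alloc S J A} \<subseteq> welfare w J ` (J \<rightarrow>\<^sub>E Pow S)"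
  proof
    fix x assume "x \<in> {welfare w J A | A. is_alloc S J A}"
    then obtain A where x: "x = welfare w J A" and A: "is_alloc S J A" by auto
    have "restrict A J \<in> J \<rightarrow>\<^sub>E Pow S" using A by (auto simp: is_alloc_def)
    moreover have "welfare w J (restrict A J) = x"
      unfolding x welfare_def by (intro sum.cong) auto
    ultimately show "x \<in> welfare w J ` (J \<rightarrow>\<^sub>E Pow S)" by force
  qed
  then show ?thesis using assms by (meson finite_PiE finite_Pow_iff finite_imageI finite_subset)
qed

lemma welfare_le_opt_welfare:
  "finite S \<Longrightarrow> finite J \<Longrightarrow> is_alloc S J B \<Longrightarrow> welfare w J B \<le> opt_welfare S J w"
  unfolding opt_welfare_def by (intro Max_ge finite_welfares) auto

lemma opt_welfare_attained:
  assumes "finite S" and "finite J" and "is_alloc S J B"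
  obtains C where "is_alloc S J C" and "opt_welfare S J w = welfare w J C"
proof -
  have "opt_welfare S J w \<in> {welfare w J A | A. is_alloc S J A}"
    unfolding opt_welfare_def using assms by (intro Max_in finite_welfares) auto
  then show ?thesis using that by auto
qed

lemma optimal_alloc_welfare:
  assumes "finite X" and "finite J" and "optimal_alloc X J w A"
  shows "welfare w J A = opt_welfare X J w"
  using assms unfolding optimal_alloc_def opt_welfare_def
  by (intro Max_eqI[symmetric] finite_welfares) auto

lemma welfare_le_OR_list:
  assumes "finite S" and "distinct is" and "is_alloc S (set is) B"
  shows "welfare f (set is) B \<le> OR_list (map f is) S"
  using assms
proof (induction "is" arbitrary: S)
  case Nil
  then show ?case by (simp add: welfare_def)
next
  case (Cons i "is")
  then have Bi: "B i \<subseteq> S" and rest: "is_alloc (S - B i) (set is) B"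
    by (simp_all add: is_alloc_insert)
  have "welfare f (set (i # is)) B = f i (B i) + welfare f (set is) B"
    using Cons.prems by (simp add: welfare_insert)
  also have "\<dots> \<le> f i (B i) + OR_list (map f is) (S - B i)"
    using Cons rest by simp
  also have "\<dots> \<le> OR_list (map f (i # is)) S"
    using Cons.prems Bi by (simp add: vee_ge)
  finally show ?case .
qed

text \<open>The allocation need not cover S: the empty OR discards the items left over.\<close>

lemma OR_list_attained:
  assumes "finite S" and "distinct is"
  obtains T B where "T \<subseteq> S" and "is_alloc T (set is) B"
    and "welfare f (set is) B = OR_list (map f is) S"
  using assms
proof (induction "is" arbitrary: S thesis)
  case Nil
  then show ?case by (simp add: is_alloc_def welfare_def)
next
  case (Cons i "is")
  obtain P where P: "P \<subseteq> S" and OR_eq: "OR_list (map f (i # is)) S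
      = f i P + OR_list (map f is) (S - P)"
    using vee_attained[OF \<open>finite S\<close>] by auto
  obtain T B where T: "T \<subseteq> S - P" and B: "is_alloc T (set is) B"
    and B_welfare: "welfare f (set is) B = OR_list (map f is) (S - P)"
    using Cons.IH[of "S - P"] Cons.prems by auto
  have i: "i \<notin> set is" "finite (set is)" using Cons.prems by auto
  have "(P \<union> T) - P = T" using T by auto
  then have "is_alloc (P \<union> T) (set (i # is)) (B(i := P))"
    using B i by (simp add: is_alloc_insert)
  moreover have "welfare f (set (i # is)) (B(i := P)) = OR_list (map f (i # is)) S"
    using i B_welfare OR_eq by (simp add: welfare_insert)
  ultimately show ?case using Cons.prems(1) P T by blast
qed

lemma opt_welfare_le_OR_list:
  assumes "finite S" and "distinct is" and "is \<noteq> []"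
  shows "opt_welfare S (set is) f \<le> OR_list (map f is) S"
proof -
  obtain j where j: "j \<in> set is" using assms(3) by (cases "is") auto
  obtain C where C: "is_alloc S (set is) C" and opt: "opt_welfare S (set is) f = welfare f (set is) C"
    by (rule opt_welfare_attained[OF assms(1) finite_set is_alloc_exists[OF j]])
  show ?thesis unfolding opt by (rule welfare_le_OR_list[OF assms(1,2) C])
qed

text \<open>Monotonicity of the first valuation lets it absorb the items the OR discards.\<close>

lemma OR_list_le_opt_welfare:
  assumes "finite X" and "distinct (p # is)" and "valuation X (f p)"
  shows "OR_list (map f (p # is)) X \<le> opt_welfare X (set (p # is)) f"
proof -
  obtain P where P: "P \<subseteq> X" and OR_eq: "OR_list (map f (p # is)) X
      = f p P + OR_list (map f is) (X - P)"
    using vee_attained[OF \<open>finite X\<close>] by auto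
  obtain T B where T: "T \<subseteq> X - P" and B: "is_alloc T (set is) B"
    and B_welfare: "welfare f (set is) B = OR_list (map f is) (X - P)"
    using OR_list_attained[of "X - P" "is"] assms(1,2) by auto
  have p: "p \<notin> set is" "finite (set is)" using assms(2) by auto
  define D where "D = B(p := X - T)"
  have "X - (X - T) = T" using T by auto
  then have D: "is_alloc X (set (p # is)) D"
    using B p unfolding D_def by (simp add: is_alloc_insert)
  have "f p P \<le> f p (X - T)"
    using P T by (intro valuation_mono[OF assms(3)]) auto
  then have "OR_list (map f (p # is)) X \<le> welfare f (set (p # is)) D"
    using OR_eq B_welfare p unfolding D_def by (simp add: welfare_insert)
  also have "\<dots> \<le> opt_welfare X (set (p # is)) f"
    using welfare_le_opt_welfare[OF assms(1) _ D] by simp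
  finally show ?thesis .
qed

lemma vcg_payment_ge:
  assumes "finite X" and "distinct (p # q # os)" and "valuation X (f q)"
    and A: "is_alloc X (set (p # q # os)) A"
  shows "OR_list (map f os) (X - A q) - welfare f (set os) A
    \<le> vcg_payment X (set (p # q # os)) f A p"
proof -
  have others: "set (p # q # os) - {p} = set (q # os)" using assms(2) by auto
  have "A q \<subseteq> X" using A unfolding is_alloc_def by simp
  then have "f q (A q) + OR_list (map f os) (X - A q) \<le> OR_list (map f (q # os)) X"
    using assms(1) by (simp add: vee_ge)
  also have "\<dots> \<le> opt_welfare X (set (q # os)) f"
    using assms by (intro OR_list_le_opt_welfare) auto
  moreover have "welfare f (set (q # os)) A = f q (A q) + welfare f (set os) A"
    using assms(2) by (simp add: welfare_insert)
  ultimately show ?thesis unfolding vcg_payment_def others by linarith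
qed

lemma false_name_payments_ge:
  fixes f :: "'b \<Rightarrow> 'a valuation" and os :: "'b list"
  defines "U \<equiv> OR_list (map f os)"
  assumes "finite X" and "distinct (p # q # os)"
    and "valuation X (f p)" and "valuation X (f q)" and "submodular X U"
    and A: "is_alloc X (set (p # q # os)) A"
  shows "U X - U (X - (A p \<union> A q))
    \<le> vcg_payment X (set (p # q # os)) f A p + vcg_payment X (set (p # q # os)) f A q"
proof -
  define R where "R = X - (A p \<union> A q)"
  have pq: "p \<notin> set (q # os)" "q \<notin> set os" using assms(3) by auto
  have "A p \<subseteq> X" and "is_alloc (X - A p) (set (q # os)) A"
    using A pq(1) by (simp_all add: is_alloc_insert)
  moreover have "X - A p - A q = R" unfolding R_def by auto
  ultimately have "A q \<subseteq> X - A p" and "is_alloc R (set os) A"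
    using pq(2) by (simp_all add: is_alloc_insert)
  then have "welfare f (set os) A \<le> U R"
    unfolding U_def using assms(2,3) by (intro welfare_le_OR_list) (auto simp: R_def)
  moreover have "U X + U R \<le> U (X - A p) + U (X - A q)"
  proof -
    have "(X - A p) \<union> (X - A q) = X" and "(X - A p) \<inter> (X - A q) = R"
      using \<open>A q \<subseteq> X - A p\<close> unfolding R_def by auto
    then show ?thesis using \<open>submodular X U\<close> unfolding submodular_def by (metis Diff_subset)
  qed
  moreover have "U (X - A q) - welfare f (set os) A \<le> vcg_payment X (set (p # q # os)) f A p"
    unfolding U_def using assms by (intro vcg_payment_ge) auto
  moreover have "U (X - A p) - welfare f (set os) A \<le> vcg_payment X (set (p # q # os)) f A q"
  proof -
    have "set (q # p # os) = set (p # q # os)" by auto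
    then show ?thesis
      unfolding U_def using assms vcg_payment_ge[of X q p os f A] by auto
  qed
  ultimately show ?thesis unfolding R_def by linarith
qed

lemma truthful_utility_ge:
  fixes f :: "'b \<Rightarrow> 'a valuation" and os :: "'b list"
  defines "U \<equiv> OR_list (map f os)"
  assumes "finite X" and "distinct (p # os)" and "os \<noteq> []" and "valuation X (f p)"
    and A: "optimal_alloc X (set (p # os)) f A" and "S \<subseteq> X"
  shows "f p S - (U X - U (X - S)) \<le> f p (A p) - vcg_payment X (set (p # os)) f A p"
proof -
  have others: "set (p # os) - {p} = set os" using assms(3) by auto
  have "f p S + U (X - S) \<le> OR_list (map f (p # os)) X"
    unfolding U_def using assms(2,7) by (simp add: vee_ge)
  also have "\<dots> \<le> opt_welfare X (set (p # os)) f"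
    using assms by (intro OR_list_le_opt_welfare) auto
  also have "\<dots> = f p (A p) + welfare f (set os) A"
    using assms(2,3) A by (simp add: optimal_alloc_welfare[symmetric] welfare_insert)
  moreover have "opt_welfare X (set os) f \<le> U X"
    unfolding U_def using assms by (intro opt_welfare_le_OR_list) auto
  ultimately show ?thesis unfolding vcg_payment_def others by linarith
qed

theorem theorem12:
  fixes X :: "'a set" and us :: "nat \<Rightarrow> 'a valuation" and k :: nat
    and v v1 v2 :: "'a valuation" and A A' :: "nat \<Rightarrow> 'a set"
  assumes "finite X"
    and "1 \<le> k"
    and "\<forall>j<k. valuation X (us j)"
    and "valuation X v" and "valuation X v1" and "valuation X v2"
    and "submodular X (OR_list (map us [0..<k]))"
    and "optimal_alloc X {..<k+2}
           (\<lambda>i. if i = 0 then v1 else if i = 1 then v2 else us (i - 2)) A"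
    and "optimal_alloc X {..<k+1} (\<lambda>i. if i = 0 then v else us (i - 1)) A'"
  shows "v (A 0 \<union> A 1)
           - vcg_payment X {..<k+2} (\<lambda>i. if i = 0 then v1 else if i = 1 then v2 else us (i - 2)) A 0
           - vcg_payment X {..<k+2} (\<lambda>i. if i = 0 then v1 else if i = 1 then v2 else us (i - 2)) A 1
         \<le> v (A' 0) - vcg_payment X {..<k+1} (\<lambda>i. if i = 0 then v else us (i - 1)) A' 0"
proof -
  define w where "w = (\<lambda>i. if i = 0 then v1 else if i = 1 then v2 else us (i - 2))"
  define w' where "w' = (\<lambda>i. if i = 0 then v else us (i - 1))"
  define U where "U = OR_list (map us [0..<k])"
  have bidders: "{..<k+2} = set (0 # 1 # [2..<k+2])" "{..<k+1} = set (0 # [1..<k+1])" by auto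
  have others: "map w [2..<k+2] = map us [0..<k]" "map w' [1..<k+1] = map us [0..<k]"
    unfolding map_add_upt[of 2 k, symmetric] map_add_upt[of 1 k, symmetric]
    by (simp_all add: w_def w'_def)
  have A: "optimal_alloc X (set (0 # 1 # [2..<k+2])) w A"
    unfolding w_def bidders(1)[symmetric] by (rule assms(8))
  have A': "optimal_alloc X (set (0 # [1..<k+1])) w' A'"
    unfolding w'_def bidders(2)[symmetric] by (rule assms(9))
  have "U X - U (X - (A 0 \<union> A 1)) \<le> vcg_payment X {..<k+2} w A 0 + vcg_payment X {..<k+2} w A 1"
    unfolding U_def others(1)[symmetric] bidders(1)
    using assms(1,5,6,7) A others(1)
    by (intro false_name_payments_ge) (auto simp: w_def optimal_alloc_def)
  moreover have "v (A 0 \<union> A 1) - (U X - U (X - (A 0 \<union> A 1)))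
      \<le> v (A' 0) - vcg_payment X {..<k+1} w' A' 0"
  proof -
    have v: "v = w' 0" by (simp add: w'_def)
    have "A 0 \<union> A 1 \<subseteq> X" using A unfolding optimal_alloc_def is_alloc_def by auto
    then show ?thesis
      unfolding U_def others(2)[symmetric] bidders(2) v
      using assms(1,2,4) A' by (intro truthful_utility_ge) (auto simp: w'_def)
  qed
  ultimately show ?thesis unfolding w_def w'_def by linarith
qed

end
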